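(* Fix $s>0$. For each $\delta\in(0,\delta_0)$ and each $\rho\in(\delta/\delta_0,1)$ there exists a constant $c_3=c_3(\delta,\rho)>0$ such that for every integer $n\ge1$ and every partition $\lambda=1^{n_1}2^{n_2}\cdots$ of $n$, \[ \mathsf L_{[0,\delta n^{5/4}]}\le c_3\,\rho^{n+1}. \]
   Context: For integers $a,i\ge1$ let $f_{a,i}=\frac1{2i}\sum_{d\mid i,\ d\text{ odd}}\mu(d)(2a)^{i/d}$ ($\mu$ the Möbius function; sum over positive odd divisors of $i$), a positive integer, and define $g_{a,i}$ by $f_{a,i}=\frac{(2a)^i}{2i}g_{a,i}$. Let $c_1>0$ be a fixed constant such that $e^{-c_1(2a)^{-2i/3}}\le g_{a,i}\le e^{c_1(2a)^{-2i/3}}$ for all $a,i\ge1$ (e.g. $c_1=4$). Fix $s>0$; for each $n\ge1$ let $t=t_n\in(0,1)$ be the unique solution in $(0,1)$ of $\frac{4t}{(1+t)^2}=e^{-s/\sqrt n}$, i.e. $t=\frac{1-\sqrt{1-e^{-s/\sqrt n}}}{1+\sqrt{1-e^{-s/\sqrt n}}}$. Set $\delta_0=\left[\sup_{n\ge1}\left(n^{1/4}\log(1/t_n)\,e^{(c_1/4)+1}\right)\right]^{-1}$ (a positive number). Given a partition $\lambda$ of $n$ with $n_i$ parts of size $i$, for $a,i\ge1$ let \[ \mathsf K_{a,i}=\sum_{\nu=0}^{n_i}\frac1{2^{n_i}}\binom{n_i}{\nu}\frac{(f_{a,i}-\nu+n_i-1)!}{(f_{a,i}-\nu)!\,f_{a,i}^{\,n_i-1}},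 \] equivalently $\mathsf K_{a,i}=\frac{n_i!}{(2f_{a,i})^{n_i}}[x^{n_i}]\left(\frac{1+x}{1-x}\right)^{f_{a,i}}$ (here the ratio of factorials is the polynomial $\prod_{k=1}^{n_i-1}(f_{a,i}-\nu+k)$ when $n_i\ge1$, and $\mathsf K_{a,i}=1$ when $n_i=0$). For $A\subseteq\mathbb R$ define \[ \mathsf L_A=\frac{\log^{n+1}(1/t)}{n!}\sum_{a\in A\cap\{1,2,3,\dots\}}a^n t^a\prod_{1\le i\le n}g_{a,i}^{n_i}\mathsf K_{a,i}. \] *)

theory Defs
  imports "HOL-Analysis.Analysis" "HOL-Computational_Algebra.Squarefree"
begin

definition mu :: "nat \<Rightarrow> real" where
  "mu d = (if squarefree d then (-1) ^ card (prime_factors d) else 0)"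

text \<open>f_{a,i} (as a real number; it is a positive integer).\<close>
definition ff :: "nat \<Rightarrow> nat \<Rightarrow> real" where
  "ff a i = (1 / (2 * real i)) *
     (\<Sum>d\<in>{d. d dvd i \<and> odd d}. mu d * (2 * real a) ^ (i div d))"

definition gg :: "nat \<Rightarrow> nat \<Rightarrow> real" where
  "gg a i = ff a i * (2 * real i) / (2 * real a) ^ i"

definition tt :: "real \<Rightarrow> nat \<Rightarrow> real" where
  "tt s n = (1 - sqrt (1 - exp (- s / sqrt (real n)))) / (1 + sqrt (1 - exp (- s / sqrt (real n))))"

definition delta0 :: "real \<Rightarrow> real \<Rightarrow> real" where
  "delta0 s c1 = inverse (SUP n\<in>{1::nat..}. real n powr (1/4) * ln (1 / tt s n) * exp (c1 / 4 + 1))"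

text \<open>K_{a,i} for multiplicity k = n_i; the factorial ratio is the polynomial
  prod_{j=1}^{k-1} (f - nu + j), and K = 1 when k = 0.\<close>
definition KK :: "nat \<Rightarrow> nat \<Rightarrow> nat \<Rightarrow> real" where
  "KK a i k = (if k = 0 then 1 else
     (\<Sum>\<nu>=0..k. (1 / 2 ^ k) * real (k choose \<nu>) *
        (\<Prod>j=1..k-1. ff a i - real \<nu> + real j) / ff a i ^ (k - 1)))"

text \<open>L_A for a partition of n given by multiplicities m (m i = n_i).\<close>
definition LL :: "real \<Rightarrow> nat \<Rightarrow> (nat \<Rightarrow> nat) \<Rightarrow> real set \<Rightarrow> real" where
  "LL s n m A = (ln (1 / tt s n)) ^ (n + 1) / fact n *
     (\<Sum>a\<in>{a::nat. 1 \<le> a \<and> real a \<in> A}.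
        real a ^ n * tt s n ^ a * (\<Prod>i=1..n. gg a i ^ m i * KK a i (m i)))"

definition is_partition_mult :: "nat \<Rightarrow> (nat \<Rightarrow> nat) \<Rightarrow> bool" where
  "is_partition_mult n m \<longleftrightarrow> m 0 = 0 \<and> (\<forall>i>n. m i = 0) \<and> (\<Sum>i=1..n. i * m i) = n"

end

(* Each summand of L is bounded termwise.  By definition, a^i g_{a,i} = f_{a,i} 2i/2^i <= f_{a,i}
   and |K_{a,i}| <= (1 + n_i/f_{a,i})^{n_i}.  Hence, if a^i g_{a,i} <= B^i for all i, the factor of
   the parts of size i is at most (B + n_i)^{i n_i}, and the summand is at most (B + n)^n.  The
   hypothesis on g allows B = a e^{c_1 (2a)^{-2/3}} <= C + M a for any fixed M > 1.  There are at
   most delta n^{5/4} summands, n! >= (n/e)^n and log(1/t) <= n^{-1/4} / (delta_0 e^{c_1/4 + 1}),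
   so L <= c n y_n^n where y_n -> delta M e^{-c_1/4} / delta_0, which is below rho for M close
   to 1; and n y_n^n = O(rho^n). *)

theory Submission
  imports Defs "HOL-Real_Asymp.Real_Asymp"
begin

lemma two_mult_le_two_power: "2 * i \<le> (2::nat) ^ i"
proof (cases i)
  case (Suc j)
  then show ?thesis using less_exp[of j] by (simp del: less_exp)
qed simp

lemma add_power_le_power_add:
  fixes x y :: "'a::linordered_semidom"
  assumes "0 \<le> x" "0 \<le> y" "1 \<le> i"
  shows "x ^ i + y ^ i \<le> (x + y) ^ i"
  using assms(3)
proof (induction i rule: dec_induct)
  case base
  then show ?case by simp
next
  case (step i)
  have "x * x ^ i + y * y ^ i \<le> x * (x + y) ^ i + y * (x + y) ^ i"
    using assms by (intro add_mono mult_left_mono power_mono) auto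
  then show ?case by (simp add: distrib_right)
qed

lemma fact_ge_power_div_exp: "(real n / exp 1) ^ n \<le> fact n"
proof -
  have exp_sums: "(\<lambda>k. real n ^ k /\<^sub>R fact k) sums exp (real n)"
    by (rule exp_converges)
  have "real n ^ n / fact n \<le> exp (real n)"
    using sum_le_suminf[OF sums_summable[OF exp_sums], of "{n}"] sums_unique[OF exp_sums]
    by (simp add: divide_inverse mult.commute)
  then show ?thesis
    by (simp add: power_divide divide_le_eq mult.commute flip: exp_of_nat_mult)
qed

lemma card_nat_interval_le:
  fixes N :: real
  assumes "0 \<le> N"
  shows "real (card {a::nat. 1 \<le> a \<and> real a \<in> {0..N}}) \<le> N"
proof -
  have "{a::nat. 1 \<le> a \<and> real a \<in> {0..N}} = {1..nat \<lfloor>N\<rfloor>}"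
    using assms by (auto simp: le_nat_iff le_floor_iff)
  then show ?thesis using assms by simp
qed

lemma nat_mult_power_le_geometric:
  fixes x :: "nat \<Rightarrow> real"
  assumes "x \<longlonglongrightarrow> q" "q < r" "\<And>n. 0 \<le> x n"
  shows "\<exists>K>0. \<forall>n. real n * x n ^ n \<le> K * r ^ n"
proof -
  define r' where "r' = (q + r) / 2"
  have "0 \<le> q" using assms(1,3) by (simp add: LIMSEQ_le_const)
  then have r': "q < r'" "0 < r'" "r' < r" using assms(2) by (auto simp: r'_def)
  define G where "G n = real n * x n ^ n / r ^ n" for n
  have "eventually (\<lambda>n. x n < r') sequentially"
    using order_tendstoD(2)[OF assms(1) r'(1)] .
  then have G_le: "eventually (\<lambda>n. G n \<le> real n * (r' / r) ^ n) sequentially"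
  proof eventually_elim
    case (elim n)
    then have "x n ^ n \<le> r' ^ n" using assms(3) by (intro power_mono) auto
    then have "G n \<le> real n * r' ^ n / r ^ n"
      unfolding G_def using r' by (intro divide_right_mono mult_left_mono) auto
    then show ?case by (simp add: power_divide)
  qed
  have lim: "(\<lambda>n. real n * (r' / r) ^ n) \<longlonglongrightarrow> 0"
    using r' by (intro powser_times_n_limit_0) simp
  have G_nonneg: "eventually (\<lambda>n. 0 \<le> G n) sequentially"
    using assms(3) r' by (simp add: G_def)
  have "G \<longlonglongrightarrow> 0"
    by (rule real_tendsto_sandwich[OF G_nonneg G_le tendsto_const lim])
  then obtain K where K: "0 < K" "\<And>n. norm (G n) \<le> K"
    using convergent_imp_Bseq convergentI BseqE by metis
  show ?thesis
  proof (intro exI conjI allI)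
    fix n
    have "real n * x n ^ n = G n * r ^ n" using r' by (simp add: G_def)
    also have "\<dots> \<le> K * r ^ n" using K(2)[of n] r' by (intro mult_right_mono) auto
    finally show "real n * x n ^ n \<le> K * r ^ n" .
  qed (rule K(1))
qed

lemma mult_exp_powr_le_affine:
  fixes c M :: real
  assumes "0 \<le> c" "1 < M"
  shows "\<exists>C\<ge>0. \<forall>x\<ge>1. x * exp (c * (2 * x) powr (-2/3)) \<le> C + M * x"
proof -
  have "((\<lambda>x::real. c * (2 * x) powr (-2/3)) \<longlongrightarrow> 0) at_top" by real_asymp
  moreover have "0 < ln M" using assms(2) by simp
  ultimately have "eventually (\<lambda>x. c * (2 * x) powr (-2/3) < ln M) at_top"
    by (rule order_tendstoD(2))
  then obtain A where A: "\<And>x. A \<le> x \<Longrightarrow> c * (2 * x) powr (-2/3) < ln M"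
    by (auto simp: eventually_at_top_linorder)
  show ?thesis
  proof (intro exI conjI allI impI)
    fix x :: real assume x: "1 \<le> x"
    show "x * exp (c * (2 * x) powr (-2/3)) \<le> \<bar>A\<bar> * exp c + M * x"
    proof (cases "A \<le> x")
      case True
      then have "exp (c * (2 * x) powr (-2/3)) < exp (ln M)" using A by simp
      then have "exp (c * (2 * x) powr (-2/3)) \<le> M" using assms(2) by simp
      then show ?thesis using x by (simp add: add_increasing)
    next
      case False
      have "(2 * x) powr (-2/3) \<le> (2 * x) powr 0" using x by (intro powr_mono) auto
      then have "(2 * x) powr (-2/3) \<le> 1" using x by simp
      then have "exp (c * (2 * x) powr (-2/3)) \<le> exp c"
        using assms(1) by (simp add: mult_left_le)
      then have "x * exp (c * (2 * x) powr (-2/3)) \<le> \<bar>A\<bar> * exp c"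
        using False x by (intro mult_mono) auto
      then show ?thesis using x assms(2) by (simp add: add_increasing2)
    qed
  qed simp
qed

lemma partition_mult_le:
  assumes "is_partition_mult n m"
  shows "m i \<le> n"
proof (cases "i \<in> {1..n}")
  case True
  then have "m i \<le> i * m i" by simp
  also have "\<dots> \<le> (\<Sum>j=1..n. j * m j)" using True by (intro member_le_sum) auto
  finally show ?thesis using assms by (simp add: is_partition_mult_def)
next
  case False
  with assms show ?thesis by (cases "i = 0") (auto simp: is_partition_mult_def)
qed

lemma power_partition_mult:
  assumes "is_partition_mult n m"
  shows "x ^ n = (\<Prod>i=1..n. x ^ (i * m i))"
  using assms by (metis is_partition_mult_def power_sum)

lemma KK_abs_le:
  assumes "ff a i > 0"
  shows "\<bar>KK a i k\<bar> \<le> (1 + real k / ff a i) ^ k"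
proof (cases "k = 0")
  case True
  then show ?thesis by (simp add: KK_def)
next
  case False
  define F where "F = ff a i"
  define P where "P \<nu> = (\<Prod>j=1..k-1. F - real \<nu> + real j)" for \<nu>
  have F: "F > 0" using assms by (simp add: F_def)
  have P_le: "\<bar>P \<nu>\<bar> \<le> (F + real k) ^ (k - 1)" if "\<nu> \<le> k" for \<nu>
  proof -
    have "\<bar>F - real \<nu> + real j\<bar> \<le> F + real k" if "j \<in> {1..k-1}" for j
      using that \<open>\<nu> \<le> k\<close> F by (auto simp: abs_le_iff)
    then have "(\<Prod>j=1..k-1. \<bar>F - real \<nu> + real j\<bar>) \<le> (\<Prod>j=1..k-1. F + real k)"
      by (intro prod_mono) auto
    then show ?thesis by (simp add: P_def abs_prod)
  qed
  have "KK a i k = (\<Sum>\<nu>=0..k. real (k choose \<nu>) * P \<nu>) / (2 ^ k * F ^ (k - 1))"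
    using False by (simp add: KK_def F_def P_def sum_divide_distrib)
  also have "\<bar>\<dots>\<bar> \<le> (\<Sum>\<nu>=0..k. real (k choose \<nu>) * (F + real k) ^ (k - 1))
      / (2 ^ k * F ^ (k - 1))"
    using F P_le
    by (auto simp: abs_mult intro!: divide_right_mono order_trans[OF sum_abs] sum_mono mult_left_mono)
  also have "\<dots> = ((F + real k) / F) ^ (k - 1)"
    using F by (simp add: atLeast0AtMost choose_row_sum flip: sum_distrib_right of_nat_sum power_divide)
  also have "\<dots> \<le> (1 + real k / F) ^ k"
    using F by (simp add: add_divide_distrib power_increasing)
  finally show ?thesis by (simp add: F_def)
qed

lemma power_mult_gg_KK_le:
  fixes B :: real
  assumes "1 \<le> a" "0 < gg a i" "real a ^ i * gg a i \<le> B ^ i" "0 \<le> B" "1 \<le> i"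
  shows "real a ^ (i * k) * \<bar>gg a i ^ k * KK a i k\<bar> \<le> (B + real k) ^ (i * k)"
proof -
  define g where "g = gg a i"
  define f where "f = ff a i"
  have ag_eq: "real a ^ i * g = f * (2 * real i / 2 ^ i)"
    using assms(1) by (simp add: g_def f_def gg_def power_mult_distrib field_simps)
  have "real (2 * i) \<le> real (2 ^ i)"
    by (simp only: of_nat_le_iff two_mult_le_two_power)
  then have ratio_le: "2 * real i / 2 ^ i \<le> 1" by simp
  have g_pos: "0 < g" using assms(2) by (simp add: g_def)
  then have ag_pos: "0 < real a ^ i * g" using assms(1) by simp
  then have f_pos: "0 < f"
    using ag_eq assms(5) by (auto simp: zero_less_divide_iff zero_less_mult_iff)
  have ag_le: "real a ^ i * g / f \<le> 1"
    using ag_eq f_pos ratio_le by simp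
  have "real a ^ (i * k) * \<bar>g ^ k * KK a i k\<bar> = (real a ^ i * g) ^ k * \<bar>KK a i k\<bar>"
    using g_pos by (simp add: abs_mult power_mult power_mult_distrib)
  also have "\<dots> \<le> (real a ^ i * g) ^ k * (1 + real k / f) ^ k"
    using KK_abs_le f_pos ag_pos by (intro mult_left_mono) (auto simp: f_def)
  also have "\<dots> = (real a ^ i * g + real k * (real a ^ i * g / f)) ^ k"
    by (simp add: ring_distribs mult.commute flip: power_mult_distrib)
  also have "\<dots> \<le> (B ^ i + real k) ^ k"
    using ag_le ag_pos f_pos assms(3) by (intro power_mono add_mono mult_left_le) (auto simp: g_def)
  also have "\<dots> \<le> ((B + real k) ^ i) ^ k"
  proof (intro power_mono)
    have "real k \<le> real k ^ i"
      using assms(5) by (cases "k = 0") (auto intro: self_le_power)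
    then show "B ^ i + real k \<le> (B + real k) ^ i"
      using add_power_le_power_add[of B "real k" i] assms(4,5) by linarith
  qed (use assms(4) in simp)
  finally show ?thesis by (simp add: g_def power_mult)
qed

lemma power_mult_gg_le:
  fixes c1 :: real
  assumes "0 \<le> c1" "1 \<le> a" "1 \<le> i"
    and "gg a i \<le> exp (c1 * (2 * real a) powr (- 2 * real i / 3))"
  shows "real a ^ i * gg a i \<le> (real a * exp (c1 * (2 * real a) powr (-2/3))) ^ i"
proof -
  have "(2 * real a) powr (- 2 * real i / 3) \<le> (2 * real a) powr (-2/3)"
    using assms(2,3) by (intro powr_mono) auto
  also have "\<dots> \<le> real i * (2 * real a) powr (-2/3)"
    using assms(3) by (intro mult_le_cancel_right1[THEN iffD2]) auto
  finally have "c1 * (2 * real a) powr (- 2 * real i / 3) \<le> real i * (c1 * (2 * real a) powr (-2/3))"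
    using assms(1) by (simp add: mult_left_mono mult.left_commute)
  then have "gg a i \<le> exp (real i * (c1 * (2 * real a) powr (-2/3)))"
    using assms(4) by (meson exp_le_cancel_iff order_trans)
  then have "real a ^ i * gg a i \<le> real a ^ i * exp (c1 * (2 * real a) powr (-2/3)) ^ i"
    by (intro mult_left_mono) (simp_all add: exp_of_nat_mult)
  then show ?thesis by (simp only: power_mult_distrib)
qed

lemma LL_summand_le:
  fixes t B :: real
  assumes "is_partition_mult n m" "1 \<le> a" "0 \<le> t" "t \<le> 1" "0 \<le> B"
    and "\<And>i. 1 \<le> i \<Longrightarrow> 0 < gg a i \<and> real a ^ i * gg a i \<le> B ^ i"
  shows "real a ^ n * t ^ a * (\<Prod>i=1..n. gg a i ^ m i * KK a i (m i)) \<le> (B + real n) ^ n"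
proof -
  define P where "P = (\<Prod>i=1..n. gg a i ^ m i * KK a i (m i))"
  have "t ^ a * P \<le> t ^ a * \<bar>P\<bar>"
    using assms(3) by (simp add: mult_left_mono)
  also have "\<dots> \<le> \<bar>P\<bar>"
    using assms(3,4) by (simp add: mult_left_le_one_le power_le_one)
  finally have "real a ^ n * t ^ a * P \<le> real a ^ n * \<bar>P\<bar>"
    by (simp add: mult.assoc mult_left_mono)
  also have "\<dots> = (\<Prod>i=1..n. real a ^ (i * m i) * \<bar>gg a i ^ m i * KK a i (m i)\<bar>)"
    unfolding P_def abs_prod power_partition_mult[OF assms(1), of "real a"]
    by (rule prod.distrib[symmetric])
  also have "\<dots> \<le> (\<Prod>i=1..n. (B + real (m i)) ^ (i * m i))"
    using assms by (intro prod_mono conjI power_mult_gg_KK_le) auto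
  also have "\<dots> \<le> (\<Prod>i=1..n. (B + real n) ^ (i * m i))"
    using partition_mult_le[OF assms(1)] assms(5) by (intro prod_mono conjI power_mono) auto
  also have "\<dots> = (B + real n) ^ n"
    by (rule power_partition_mult[OF assms(1), symmetric])
  finally show ?thesis by (simp add: P_def)
qed

lemma tt_in_unit_interval:
  assumes "0 < s" "1 \<le> n"
  shows "0 < tt s n" "tt s n < 1"
proof -
  define u where "u = sqrt (1 - exp (- s / sqrt (real n)))"
  have "0 < s / sqrt (real n)" using assms by simp
  then have "0 < u" "u < 1" by (simp_all add: u_def)
  then show "0 < tt s n" "tt s n < 1"
    unfolding tt_def u_def[symmetric] by simp_all
qed

lemma root4_mult_ln_inverse_tt_le:
  assumes "0 < s" "1 \<le> n"
  shows "real n powr (1/4) * ln (1 / tt s n) \<le> 2 * sqrt s / (1 - sqrt (1 - exp (- s)))"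
proof -
  define x where "x = s / sqrt (real n)"
  define u where "u = sqrt (1 - exp (- x))"
  define v where "v = sqrt (1 - exp (- s))"
  have x: "0 < x" "x \<le> s" using assms by (auto simp: x_def divide_le_eq)
  have "1 - x \<le> exp (- x)" using exp_ge_add_one_self[of "- x"] by simp
  then have u: "0 < u" "u \<le> v" "u \<le> sqrt x" using x by (auto simp: u_def v_def)
  have v: "v < 1" by (simp add: v_def)
  have tt_eq: "tt s n = (1 - u) / (1 + u)" by (simp add: tt_def u_def x_def)
  have "ln (1 / tt s n) \<le> 1 / tt s n - 1"
    using tt_in_unit_interval[OF assms] by (intro ln_le_minus_one) simp
  also have "\<dots> = 2 * u / (1 - u)"
    using u v by (simp add: tt_eq field_simps)
  also have "\<dots> \<le> 2 * sqrt x / (1 - v)"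
    using x u v by (intro frac_le) auto
  finally have ln_le: "ln (1 / tt s n) \<le> 2 * sqrt x / (1 - v)" .
  have "sqrt (sqrt (real n)) = real n powr (1/4)"
    by (simp add: powr_half_sqrt[symmetric] powr_powr)
  then have root4_sqrt_x: "real n powr (1/4) * sqrt x = sqrt s"
    using assms by (simp add: x_def real_sqrt_divide)
  have "real n powr (1/4) * ln (1 / tt s n) \<le> real n powr (1/4) * (2 * sqrt x / (1 - v))"
    using ln_le by (intro mult_left_mono) auto
  also have "\<dots> = 2 * (real n powr (1/4) * sqrt x) / (1 - v)" by simp
  finally show ?thesis by (simp add: root4_sqrt_x v_def)
qed

lemma ln_inverse_tt_le_delta0:
  assumes "0 < s" "1 \<le> n"
  shows "ln (1 / tt s n) \<le> inverse (delta0 s c1) / exp (c1 / 4 + 1) / real n powr (1/4)"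
proof -
  define h where "h n = real n powr (1/4) * ln (1 / tt s n) * exp (c1 / 4 + 1)" for n :: nat
  have "bdd_above (h ` {1..})"
  proof (rule bdd_aboveI2)
    fix n :: nat assume "n \<in> {1..}"
    then show "h n \<le> 2 * sqrt s / (1 - sqrt (1 - exp (- s))) * exp (c1 / 4 + 1)"
      unfolding h_def using root4_mult_ln_inverse_tt_le[OF assms(1), of n]
      by (intro mult_right_mono) auto
  qed
  then have "h n \<le> (SUP n\<in>{1..}. h n)" using assms(2) by (intro cSUP_upper) auto
  then have "ln (1 / tt s n) * (exp (c1 / 4 + 1) * real n powr (1/4)) \<le> inverse (delta0 s c1)"
    by (simp add: delta0_def h_def mult_ac)
  then show ?thesis using assms(2) by (simp add: pos_le_divide_eq)
qed

lemma LL_le: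
  fixes s c1 N B L :: real
  assumes "0 < s" "0 \<le> c1" "1 \<le> n" "is_partition_mult n m"
    and gg_bounds: "\<forall>a i. 1 \<le> a \<longrightarrow> 1 \<le> i \<longrightarrow>
           exp (- c1 * (2 * real a) powr (- 2 * real i / 3)) \<le> gg a i \<and>
           gg a i \<le> exp (c1 * (2 * real a) powr (- 2 * real i / 3))"
    and "0 \<le> N" "0 \<le> B"
    and B: "\<And>a. 1 \<le> a \<Longrightarrow> real a \<le> N \<Longrightarrow>
      real a * exp (c1 * (2 * real a) powr (-2/3)) \<le> B"
    and "ln (1 / tt s n) \<le> L"
  shows "LL s n m {0..N} \<le> L * N * (L * exp 1 * (B + real n) / real n) ^ n"
proof -
  define t where "t = tt s n"
  define S where "S = {a::nat. 1 \<le> a \<and> real a \<in> {0..N}}"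
  define P where "P a = (\<Prod>i=1..n. gg a i ^ m i * KK a i (m i))" for a
  have t: "0 < t" "t < 1" using tt_in_unit_interval assms(1,3) by (auto simp: t_def)
  have "0 < ln (1 / t)" using t by simp
  then have L_nonneg: "0 \<le> L" using assms(9) by (simp add: t_def)
  have summand_le: "real a ^ n * t ^ a * P a \<le> (B + real n) ^ n" if "a \<in> S" for a
    unfolding P_def
  proof (rule LL_summand_le)
    fix i :: nat assume "1 \<le> i"
    then have gg_a_i: "exp (- c1 * (2 * real a) powr (- 2 * real i / 3)) \<le> gg a i"
      "gg a i \<le> exp (c1 * (2 * real a) powr (- 2 * real i / 3))"
      using gg_bounds that by (auto simp: S_def)
    show "0 < gg a i \<and> real a ^ i * gg a i \<le> B ^ i"
    proof
      show "0 < gg a i" using gg_a_i(1) by (rule less_le_trans[OF exp_gt_zero])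
      have "real a ^ i * gg a i \<le> (real a * exp (c1 * (2 * real a) powr (-2/3))) ^ i"
        using power_mult_gg_le[OF assms(2) _ \<open>1 \<le> i\<close> gg_a_i(2)] that by (simp add: S_def)
      also have "\<dots> \<le> B ^ i"
        using B that by (intro power_mono) (auto simp: S_def)
      finally show "real a ^ i * gg a i \<le> B ^ i" .
    qed
  qed (use assms(4,7) t that in \<open>auto simp: S_def\<close>)
  have "(\<Sum>a\<in>S. real a ^ n * t ^ a * P a) \<le> real (card S) * (B + real n) ^ n"
    using summand_le by (intro sum_bounded_above) auto
  also have "\<dots> \<le> N * (B + real n) ^ n"
    using card_nat_interval_le[OF assms(6)] assms(7) by (intro mult_right_mono) (auto simp: S_def)
  finally have sum_le: "(\<Sum>a\<in>S. real a ^ n * t ^ a * P a) \<le> N * (B + real n) ^ n" .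
  have inverse_fact_le: "1 / fact n \<le> (exp 1 / real n) ^ n"
    using fact_ge_power_div_exp[of n] assms(3)
    by (simp add: power_divide divide_simps mult.commute)
  have "LL s n m {0..N} = ln (1 / t) ^ (n + 1) * (1 / fact n) * (\<Sum>a\<in>S. real a ^ n * t ^ a * P a)"
    by (simp add: LL_def S_def P_def t_def)
  also have "\<dots> \<le> ln (1 / t) ^ (n + 1) * (1 / fact n) * (N * (B + real n) ^ n)"
    using t sum_le by (intro mult_left_mono) auto
  also have "\<dots> \<le> L ^ (n + 1) * (exp 1 / real n) ^ n * (N * (B + real n) ^ n)"
    using t assms(6,7,9) inverse_fact_le L_nonneg
    by (intro mult_right_mono mult_mono power_mono) (auto simp: t_def)
  also have "\<dots> = L * N * (L * exp 1 * (B + real n) / real n) ^ n"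
    by (simp add: power_mult_distrib power_divide)
  finally show ?thesis .
qed

lemma LL_initial_segment_le:
  fixes s c1 \<delta> D C M :: real
  assumes "0 < s" "0 \<le> c1" "1 \<le> n" "is_partition_mult n m"
    and gg_bounds: "\<forall>a i. 1 \<le> a \<longrightarrow> 1 \<le> i \<longrightarrow>
           exp (- c1 * (2 * real a) powr (- 2 * real i / 3)) \<le> gg a i \<and>
           gg a i \<le> exp (c1 * (2 * real a) powr (- 2 * real i / 3))"
    and "0 \<le> \<delta>" "0 \<le> C" "0 \<le> M"
    and affine: "\<forall>x\<ge>1. x * exp (c1 * (2 * x) powr (-2/3)) \<le> C + M * x"
    and "ln (1 / tt s n) \<le> D / real n powr (1/4)"
  shows "LL s n m {0 .. \<delta> * real n powr (5/4)}
    \<le> D * \<delta> * real n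
       * (D * exp 1 * (C + M * (\<delta> * real n powr (5/4)) + real n) / real n powr (5/4)) ^ n"
proof -
  define N where "N = \<delta> * real n powr (5/4)"
  have root4_mult: "real n powr (1/4) * real n = real n powr (5/4)"
    using assms(3) powr_add[of "real n" "1/4" 1] by simp
  have "real a * exp (c1 * (2 * real a) powr (-2/3)) \<le> C + M * N"
    if "1 \<le> a" "real a \<le> N" for a
  proof -
    have "real a * exp (c1 * (2 * real a) powr (-2/3)) \<le> C + M * real a"
      using affine that(1) by simp
    also have "\<dots> \<le> C + M * N"
      using that(2) assms(8) by (simp add: mult_left_mono)
    finally show ?thesis .
  qed
  then have "LL s n m {0..N} \<le> D / real n powr (1/4) * N
      * (D / real n powr (1/4) * exp 1 * (C + M * N + real n) / real n) ^ n"
    using assms by (intro LL_le) (auto simp: N_def)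
  also have "\<dots> = D * \<delta> * real n * (D * exp 1 * (C + M * N + real n) / real n powr (5/4)) ^ n"
    using assms(3) by (simp add: N_def flip: root4_mult)
  finally show ?thesis by (simp add: N_def)
qed

lemma LL_initial_segment_le_geometric:
  fixes s c1 \<delta> D \<rho> :: real
  assumes "0 < s" "0 \<le> c1"
    and gg_bounds: "\<forall>a i. 1 \<le> a \<longrightarrow> 1 \<le> i \<longrightarrow>
           exp (- c1 * (2 * real a) powr (- 2 * real i / 3)) \<le> gg a i \<and>
           gg a i \<le> exp (c1 * (2 * real a) powr (- 2 * real i / 3))"
    and "0 < \<delta>" "0 < D"
    and ln_le: "\<And>n. 1 \<le> n \<Longrightarrow> ln (1 / tt s n) \<le> D / real n powr (1/4)"
    and "D * exp 1 * \<delta> < \<rho>"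
  shows "\<exists>c3 > 0. \<forall>n \<ge> 1. \<forall>m. is_partition_mult n m \<longrightarrow>
           LL s n m {0 .. \<delta> * real n powr (5/4)} \<le> c3 * \<rho> ^ (n + 1)"
proof -
  have "0 < D * exp 1 * \<delta>" using assms(4,5) by simp
  then have "0 < \<rho>" using assms(7) by linarith
  obtain M where M: "1 < M" "D * exp 1 * \<delta> * M < \<rho>"
    using dense[of 1 "\<rho> / (D * exp 1 * \<delta>)"] assms(4,5,7) by (auto simp: field_simps)
  obtain C where C: "0 \<le> C" "\<forall>x\<ge>1. x * exp (c1 * (2 * x) powr (-2/3)) \<le> C + M * x"
    using mult_exp_powr_le_affine[OF assms(2) M(1)] by blast
  define y where "y n = D * exp 1 * (C + M * (\<delta> * real n powr (5/4)) + real n) / real n powr (5/4)"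
    for n :: nat
  have y_lim: "y \<longlonglongrightarrow> D * exp 1 * \<delta> * M"
    unfolding y_def by real_asymp
  have y_nonneg: "0 \<le> y n" for n
    using C(1) M(1) assms(4,5) by (simp add: y_def)
  obtain K where K: "0 < K" "\<And>n. real n * y n ^ n \<le> K * \<rho> ^ n"
    using nat_mult_power_le_geometric[OF y_lim M(2) y_nonneg] by blast
  show ?thesis
  proof (intro exI[of _ "D * \<delta> * K / \<rho>"] conjI allI impI)
    show "0 < D * \<delta> * K / \<rho>"
      using assms(4,5) K(1) \<open>0 < \<rho>\<close> by simp
    fix n m assume n: "1 \<le> n" and part: "is_partition_mult n m"
    have "LL s n m {0 .. \<delta> * real n powr (5/4)} \<le> D * \<delta> * (real n * y n ^ n)"
      using LL_initial_segment_le[OF assms(1,2) n part gg_bounds _ C(1) _ C(2) ln_le[OF n]]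
        assms(4) M(1) by (simp add: y_def mult.assoc)
    also have "\<dots> \<le> D * \<delta> * (K * \<rho> ^ n)"
      using K(2) assms(4,5) by (intro mult_left_mono) auto
    also have "\<dots> = D * \<delta> * K / \<rho> * \<rho> ^ (n + 1)"
      using \<open>0 < \<rho>\<close> by simp
    finally show "LL s n m {0 .. \<delta> * real n powr (5/4)}
      \<le> D * \<delta> * K / \<rho> * \<rho> ^ (n + 1)" .
  qed
qed

theorem lemma3p2:
  fixes s c1 \<delta> \<rho> :: real
  assumes "s > 0" and "c1 > 0"
    and "\<forall>a i. 1 \<le> a \<longrightarrow> 1 \<le> i \<longrightarrow>
           exp (- c1 * (2 * real a) powr (- 2 * real i / 3)) \<le> gg a i \<and>
           gg a i \<le> exp (c1 * (2 * real a) powr (- 2 * real i / 3))"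
    and "0 < \<delta>" and "\<delta> < delta0 s c1"
    and "\<delta> / delta0 s c1 < \<rho>" and "\<rho> < 1"
  shows "\<exists>c3 > 0. \<forall>n \<ge> 1. \<forall>m. is_partition_mult n m \<longrightarrow>
           LL s n m {0 .. \<delta> * real n powr (5/4)} \<le> c3 * \<rho> ^ (n + 1)"
proof (rule LL_initial_segment_le_geometric)
  define D where "D = inverse (delta0 s c1) / exp (c1 / 4 + 1)"
  have "0 < delta0 s c1" using assms(4,5) by simp
  then show "0 < D" by (simp add: D_def)
  show "ln (1 / tt s n) \<le> D / real n powr (1/4)" if "1 \<le> n" for n
    using ln_inverse_tt_le_delta0[OF assms(1) that] by (simp add: D_def)
  \<comment> \<open>Only the factor e coming from n! >= (n/e)^n is needed; e^(c1/4) in delta0 is slack.\<close>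
  have "D * exp 1 \<le> inverse (delta0 s c1)"
    using \<open>0 < delta0 s c1\<close> assms(2) by (simp add: D_def exp_add field_simps)
  then have "D * exp 1 * \<delta> \<le> \<delta> / delta0 s c1"
    using assms(4) by (simp add: divide_inverse mult_right_mono mult.commute)
  then show "D * exp 1 * \<delta> < \<rho>" using assms(6) by linarith
qed (use assms in auto)

end
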